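(* Let $g_n:=n^{3/2}$ for $n\in\mathbb{N}_0$, and define the sequence $\{\zeta_n\}_{n\in\mathbb{N}}$ by $\zeta_1:=\frac{4g_2-g_3}{g_1}=8\sqrt2-3\sqrt3$ and, for $n\ge2$, \[ \zeta_n:=\frac{g_{n+1}}{g_n}\left(4-\frac{g_{n+2}}{g_{n+1}}-\frac{g_{n-1}}{g_n}-\frac{g_{n+1}}{g_n}\frac{1}{\zeta_{n-1}}\right). \] Then the sequence is well defined (i.e. $\zeta_n\ne0$ for all $n$) and for all $n\in\mathbb{N}$, \[ \Big(1+\frac2n\Big)^{3/2}<\zeta_n<\Big(1+\frac3n\Big)^{3/2}. \] In particular $\zeta_n>0$ for all $n\in\mathbb{N}$. *)

theory Defs
  imports Complex_Main
begin

definition g :: "nat \<Rightarrow> real" where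
  "g n = real n powr (3/2)"

text \<open>zeta is indexed from 1; the value at 0 is an unused dummy (0).
  For n >= 2 the recursion uses HOL division (x / 0 = 0), so well-definedness
  is asserted separately as zeta n \<noteq> 0.\<close>
fun zeta :: "nat \<Rightarrow> real" where
  "zeta 0 = 0"
| "zeta (Suc 0) = (4 * g 2 - g 3) / g 1"
| "zeta (Suc (Suc m)) =
     (let n = Suc (Suc m) in
      g (n+1) / g n * (4 - g (n+2) / g (n+1) - g (n-1) / g n
                       - g (n+1) / g n * (1 / zeta (n-1))))"

end

theory Submission
  imports Defs
begin

text \<open>We show by induction that \<open>g (n+2) / g n < zeta n < g (n+3) / g n\<close>, which is the claimed
  bound since \<open>1 + k/n = (n+k)/n\<close>. The recursion for \<open>zeta n\<close> is increasing in \<open>zeta (n-1)\<close>, so the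
  induction step only has to be checked at the two endpoints of the interval given by the
  induction hypothesis. There it becomes an inequality between sums of powers
  \<open>((x+a)/(x+b)) powr (3/2)\<close> with \<open>x \<ge> 2\<close>, which follows from Taylor-polynomial bounds on
  \<open>(1+u) powr (3/2)\<close> after clearing denominators.\<close>

lemma powr_three_halves_eq_mult_sqrt:
  assumes "0 \<le> (t::real)"
  shows "t powr (3/2) = t * sqrt t"
proof -
  have "t powr (3/2) = t powr (1 + 1/2)"
    by simp
  also have "\<dots> = t powr 1 * t powr (1/2)"
    by (rule powr_add)
  also have "\<dots> = t * sqrt t"
    using assms by (simp add: powr_half_sqrt)
  finally show ?thesis .
qed

lemma powr_three_halves_eq_sqrt_power3: "0 \<le> (t::real) \<Longrightarrow> t powr (3/2) = sqrt (t^3)"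
  by (simp add: powr_three_halves_eq_mult_sqrt real_sqrt_mult power3_eq_cube)

lemma powr_three_halves_le:
  fixes t p :: real
  assumes "0 \<le> t" "0 \<le> p" "t^3 \<le> p^2"
  shows "t powr (3/2) \<le> p"
  using assms by (simp add: powr_three_halves_eq_sqrt_power3 real_le_lsqrt)

lemma le_powr_three_halves:
  fixes t p :: real
  assumes "0 \<le> t" "p^2 \<le> t^3"
  shows "p \<le> t powr (3/2)"
  using assms by (simp add: powr_three_halves_eq_sqrt_power3 real_le_rsqrt)

lemma one_plus_powr_three_halves_le:
  assumes "0 \<le> (u::real)"
  shows "(1 + u) powr (3/2) \<le> 1 + 3/2*u + 3/8*u^2"
proof (rule powr_three_halves_le)
  have "(1 + 3/2*u + 3/8*u^2)^2 - (1 + u)^3 = u^3/8 + 9*u^4/64"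
    by (simp add: power2_eq_square power3_eq_cube power4_eq_xxxx algebra_simps)
  moreover have "0 \<le> u^3/8 + 9*u^4/64"
    using assms by simp
  ultimately show "(1 + u)^3 \<le> (1 + 3/2*u + 3/8*u^2)^2" by linarith
qed (use assms in simp_all)

lemma one_minus_powr_three_halves_le:
  assumes "0 \<le> (v::real)" "v \<le> 1/2"
  shows "(1 - v) powr (3/2) \<le> 1 - 3/2*v + 3/8*v^2 + 1/4*v^3"
proof (rule powr_three_halves_le)
  have "(1 - 3/2*v + 3/8*v^2 + 1/4*v^3)^2 - (1 - v)^3 = v^3 * (3/8 - 39/64*v + 3/16*v^2 + 1/16*v^3)"
    by (simp add: power2_eq_square power3_eq_cube power4_eq_xxxx algebra_simps)
  moreover have "0 \<le> v^3 * (3/8 - 39/64*v + 3/16*v^2 + 1/16*v^3)"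
    using assms by simp
  ultimately show "(1 - v)^3 \<le> (1 - 3/2*v + 3/8*v^2 + 1/4*v^3)^2" by linarith
  show "0 \<le> 1 - 3/2*v + 3/8*v^2 + 1/4*v^3"
    using assms zero_le_power2[of v] zero_le_power[OF assms(1), of 3] by linarith
qed (use assms in simp)

definition taylor3_three_halves :: "real \<Rightarrow> real" where
  "taylor3_three_halves u = 1 + 3/2*u + 3/8*u^2 - 1/16*u^3"

lemma taylor3_three_halves_le:
  assumes "-3/4 \<le> (u::real)" "u \<le> 12"
  shows "taylor3_three_halves u \<le> (1 + u) powr (3/2)"
  unfolding taylor3_three_halves_def
proof (rule le_powr_three_halves)
  have "(1 + u)^3 - (1 + 3/2*u + 3/8*u^2 - 1/16*u^3)^2 = u^4 * (12 + 12*u - u^2) / 256"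
    by (simp add: power2_eq_square power3_eq_cube power4_eq_xxxx algebra_simps)
  moreover have "0 \<le> 12 + 12*u - u^2"
  proof -
    have "12 + 12*u - u^2 = (u + 3/4) * (12 - u) + 3 + 3/4*u"
      by (simp add: power2_eq_square field_simps)
    moreover have "0 \<le> (u + 3/4) * (12 - u)"
      using assms by simp
    ultimately show ?thesis
      using assms by linarith
  qed
  then have "0 \<le> u^4 * (12 + 12*u - u^2) / 256"
    by simp
  ultimately show "(1 + 3/2*u + 3/8*u^2 - 1/16*u^3)^2 \<le> (1 + u)^3"
    by linarith
qed (use assms in simp)

lemma ratio_powr_sum_le_two:
  assumes "2 \<le> (x::real)"
  shows "((x + 2) / (x + 1)) powr (3/2) + ((x - 1) / x) powr (3/2) \<le> 2"
proof -
  define a b where "a = 1 / x" and "b = 1 / (x + 1)"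
  have x: "0 < x" using assms by simp
  have ab: "a * x = 1" "b * (x + 1) = 1"
    using x by (simp_all add: a_def b_def)
  have "(x + 2) / (x + 1) = 1 + b" "(x - 1) / x = 1 - a"
    using x by (simp_all add: field_simps a_def b_def)
  moreover have "0 \<le> b" "0 \<le> a" "a \<le> 1/2"
    using assms by (simp_all add: a_def b_def field_simps)
  then have "(1 + b) powr (3/2) \<le> 1 + 3/2*b + 3/8*b^2"
    "(1 - a) powr (3/2) \<le> 1 - 3/2*a + 3/8*a^2 + 1/4*a^3"
    by (blast intro: one_plus_powr_three_halves_le one_minus_powr_three_halves_le)+
  moreover have "(1 + 3/2*b + 3/8*b^2) + (1 - 3/2*a + 3/8*a^2 + 1/4*a^3) \<le> 2"
  proof -
    have "8*x^3*(x + 1)^2 * ((1 + 3/2*b + 3/8*b^2) + (1 - 3/2*a + 3/8*a^2 + 1/4*a^3) - 2)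
        = -(6*x^3 + 4*x^2 - 7*x - 2)"
      using ab by algebra
    moreover have "0 \<le> 6*x^3 + 4*x^2 - 7*x - 2"
    proof -
      have "4 * x \<le> x^3"
        using mult_mono[OF mult_mono[OF assms assms] order.refl, of x] x
        by (simp add: power3_eq_cube)
      then show ?thesis using assms zero_le_power2[of x] by linarith
    qed
    moreover have "0 < 8*x^3*(x + 1)^2" using x by simp
    ultimately show ?thesis
      by (smt (verit) mult_pos_pos)
  qed
  ultimately show ?thesis
    by simp
qed

lemma four_le_ratio_powr_sum:
  assumes "2 \<le> (x::real)"
  shows "4 \<le> ((x + 2) / (x + 1)) powr (3/2) + ((x - 1) / x) powr (3/2)
              + ((x - 1) * (x + 1) / (x * (x + 2))) powr (3/2) + ((x + 3) / (x + 1)) powr (3/2)"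
proof -
  define a b c where "a = 1 / x" and "b = 1 / (x + 1)" and "c = 1 / (x + 2)"
  define d where "d = (2*x + 1) * a * c"
  have x: "0 < x" using assms by simp
  have abc: "a * x = 1" "b * (x + 1) = 1" "c * (x + 2) = 1"
    using x by (simp_all add: a_def b_def c_def)
  have "(x + 2) / (x + 1) = 1 + b" "(x - 1) / x = 1 + -a"
       "(x - 1) * (x + 1) / (x * (x + 2)) = 1 + -d" "(x + 3) / (x + 1) = 1 + 2*b"
    using x add_nonneg_pos[of "x*x" "2*x"] by (simp_all add: field_simps a_def b_def c_def d_def)
  moreover have "d \<le> 3/4"
  proof -
    have "2 * x \<le> x * x"
      using mult_right_mono[OF assms, of x] x by simp
    moreover have "(2*x + 1) * 4 = 8*x + 4" "3 * (x * (x + 2)) = 3 * (x * x) + 6*x"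
      by (simp_all add: algebra_simps)
    ultimately have "(2*x + 1) * 4 \<le> 3 * (x * (x + 2))"
      using assms by linarith
    then show ?thesis
      using x by (simp add: d_def a_def c_def divide_le_eq)
  qed
  moreover have "0 \<le> d" "0 \<le> b" "b \<le> 1/2" "0 \<le> a" "a \<le> 1/2"
    using x assms by (simp_all add: a_def b_def c_def d_def field_simps)
  ultimately have "taylor3_three_halves b + taylor3_three_halves (-a) + taylor3_three_halves (-d)
      + taylor3_three_halves (2*b) \<le> ((x + 2) / (x + 1)) powr (3/2) + ((x - 1) / x) powr (3/2)
              + ((x - 1) * (x + 1) / (x * (x + 2))) powr (3/2) + ((x + 3) / (x + 1)) powr (3/2)"
    using taylor3_three_halves_le[of b] taylor3_three_halves_le[of "-a"]
      taylor3_three_halves_le[of "-d"] taylor3_three_halves_le[of "2*b"] by simp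
  moreover have "4 \<le> taylor3_three_halves b + taylor3_three_halves (-a)
      + taylor3_three_halves (-d) + taylor3_three_halves (2*b)"
  proof -
    have "16*x^3*(x + 1)^3*(x + 2)^3 * (taylor3_three_halves b + taylor3_three_halves (-a)
        + taylor3_three_halves (-d) + taylor3_three_halves (2*b) - 4)
        = 9 + 105*x + 117*x^2 + 96*x^3 + 447*x^4 + 639*x^5 + 336*x^6 + 60*x^7"
      using abc unfolding taylor3_three_halves_def d_def by algebra
    moreover have "0 < 16*x^3*(x + 1)^3*(x + 2)^3" "0 \<le> 9 + 105*x + 117*x^2 + 96*x^3 + 447*x^4 + 639*x^5 + 336*x^6 + 60*x^7"
      using x by simp_all
    ultimately show ?thesis
      by (smt (verit) zero_le_mult_iff)
  qed
  ultimately show ?thesis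
    by linarith
qed

text \<open>The right-hand sides are increasing in \<open>z\<close>; at the endpoints \<open>z = p2/p0\<close> and \<open>z = p3/p0\<close>
  of the assumed interval the two conclusions become the two inequalities between the ratios.\<close>
lemma recursion_maps_interval:
  fixes p0 p1 p2 p3 p4 z :: real
  assumes pos: "0 < p0" "0 < p1" "0 < p2" "0 < p3" "0 < p4"
    and z: "p2 / p0 < z" "z < p3 / p0"
    and lower: "p3 / p2 + p0 / p1 \<le> 2"
    and upper: "4 \<le> p3 / p2 + p0 / p1 + p0 * p2 / (p1 * p3) + p4 / p2"
  shows "p3 / p1 < p2 / p1 * (4 - p3 / p2 - p0 / p1 - p2 / p1 * (1 / z))"
    and "p2 / p1 * (4 - p3 / p2 - p0 / p1 - p2 / p1 * (1 / z)) < p4 / p1"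
proof -
  define r k where "r = p2 / p1" and "k = 4 - p3 / p2 - p0 / p1"
  have r: "0 < r" using pos by (simp add: r_def)
  have "0 < z" using z(1) pos divide_pos_pos[of p2 p0] by linarith
  then have "p0 / p3 < 1 / z" "1 / z < p0 / p2"
    using z pos by (simp_all add: field_simps)
  then have "r * (p0 / p3) < r * (1 / z)" "r * (1 / z) < r * (p0 / p2)"
    using r mult_strict_left_mono by blast+
  moreover have "r * (p0 / p2) = p0 / p1" "r * (p0 / p3) = p0 * p2 / (p1 * p3)"
    using pos by (simp_all add: r_def)
  ultimately have "r * (k - p0 / p1) < r * (k - r * (1 / z))"
    "r * (k - r * (1 / z)) < r * (k - p0 * p2 / (p1 * p3))"
    using r by (intro mult_strict_left_mono; linarith)+
  moreover have "p3 / p1 = r * (p3 / p2)" "p4 / p1 = r * (p4 / p2)"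
    using pos by (simp_all add: r_def)
  moreover have "r * (p3 / p2) \<le> r * (k - p0 / p1)" "r * (k - p0 * p2 / (p1 * p3)) \<le> r * (p4 / p2)"
    using lower upper r unfolding k_def by (intro mult_left_mono; linarith)+
  ultimately show "p3 / p1 < r * (k - r * (1 / z))" "r * (k - r * (1 / z)) < p4 / p1"
    by linarith+
qed

lemma g_pos: "0 < n \<Longrightarrow> 0 < g n"
  by (simp add: g_def)

lemma g_divide: "0 < m \<Longrightarrow> 0 < n \<Longrightarrow> g m / g n = (real m / real n) powr (3/2)"
  by (simp add: g_def powr_divide)

lemma g_ratio_sum_le_two:
  assumes "1 \<le> n"
  shows "g (n + 3) / g (n + 2) + g n / g (n + 1) \<le> 2"
proof -
  have "g (n + 3) / g (n + 2) = ((real (n + 1) + 2) / (real (n + 1) + 1)) powr (3/2)"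
       "g n / g (n + 1) = ((real (n + 1) - 1) / real (n + 1)) powr (3/2)"
    using assms by (simp_all add: g_divide add_ac)
  then show ?thesis
    using ratio_powr_sum_le_two[of "real (n + 1)"] assms by simp
qed

lemma four_le_g_ratio_sum:
  assumes "1 \<le> n"
  shows "4 \<le> g (n + 3) / g (n + 2) + g n / g (n + 1)
              + g n * g (n + 2) / (g (n + 1) * g (n + 3)) + g (n + 4) / g (n + 2)"
proof -
  define x where "x = real (n + 1)"
  have "g (n + 3) / g (n + 2) = ((x + 2) / (x + 1)) powr (3/2)"
       "g n / g (n + 1) = ((x - 1) / x) powr (3/2)"
       "g (n + 4) / g (n + 2) = ((x + 3) / (x + 1)) powr (3/2)"
    using assms by (simp_all add: g_divide add_ac x_def)
  moreover have "g n * g (n + 2) / (g (n + 1) * g (n + 3))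
      = ((x - 1) * (x + 1) / (x * (x + 2))) powr (3/2)"
    by (simp add: g_def x_def powr_mult powr_divide add_ac)
  ultimately show ?thesis
    using four_le_ratio_powr_sum[of x] assms by (simp add: x_def)
qed

lemma zeta_Suc:
  assumes "1 \<le> n"
  shows "zeta (Suc n) = g (n + 2) / g (n + 1) * (4 - g (n + 3) / g (n + 2) - g n / g (n + 1)
                          - g (n + 2) / g (n + 1) * (1 / zeta n))"
proof -
  obtain m where "n = Suc m" using assms by (cases n) auto
  then show ?thesis by (simp add: Let_def eval_nat_numeral)
qed

lemma zeta_one_bounds: "g 3 / g 1 < zeta 1 \<and> zeta 1 < g 4 / g 1"
proof -
  have g: "g 1 = 1" "g 2 = 2 * sqrt 2" "g 3 = 3 * sqrt 3" "g 4 = 8"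
    by (simp_all add: g_def powr_three_halves_eq_mult_sqrt)
  have "sqrt 108 < sqrt 128" by simp
  moreover have "sqrt 108 = 6 * sqrt 3" "sqrt 128 = 8 * sqrt 2"
    using real_sqrt_mult[of 36 3] real_sqrt_mult[of 64 2] by simp_all
  moreover have "sqrt 2 < 3/2"
    by (rule real_less_lsqrt) (simp_all add: power2_eq_square)
  moreover have "17/10 < sqrt 3"
    by (rule real_less_rsqrt) (simp add: power2_eq_square)
  ultimately show ?thesis
    using g by simp
qed

lemma zeta_bounds:
  assumes "1 \<le> n"
  shows "g (n + 2) / g n < zeta n \<and> zeta n < g (n + 3) / g n"
  using assms
proof (induction n rule: nat_induct_at_least)
  case base
  then show ?case using zeta_one_bounds by (simp add: eval_nat_numeral)
next
  case (Suc n)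
  have "0 < g n" "0 < g (n + 1)" "0 < g (n + 2)" "0 < g (n + 3)" "0 < g (n + 4)"
    using Suc.hyps by (simp_all add: g_pos)
  from recursion_maps_interval[OF this _ _ g_ratio_sum_le_two four_le_g_ratio_sum] Suc
  show ?case
    by (simp add: zeta_Suc eval_nat_numeral)
qed

theorem lemma3p1:
  shows "\<forall>n::nat. n \<ge> 1 \<longrightarrow>
           zeta n \<noteq> 0 \<and>
           (1 + 2 / real n) powr (3/2) < zeta n \<and>
           zeta n < (1 + 3 / real n) powr (3/2) \<and>
           zeta n > 0"
proof (intro allI impI)
  fix n :: nat
  assume n: "n \<ge> 1"
  have "1 + 2 / real n = real (n + 2) / real n" "1 + 3 / real n = real (n + 3) / real n"
    using n by (simp_all add: field_simps)
  then have "(1 + 2 / real n) powr (3/2) = g (n + 2) / g n"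
            "(1 + 3 / real n) powr (3/2) = g (n + 3) / g n"
    using n g_divide[of "n + 2" n] g_divide[of "n + 3" n] by simp_all
  moreover have "0 < g (n + 2) / g n"
    using n by (simp add: g_pos)
  ultimately show "zeta n \<noteq> 0 \<and> (1 + 2 / real n) powr (3/2) < zeta n \<and>
           zeta n < (1 + 3 / real n) powr (3/2) \<and> zeta n > 0"
    using zeta_bounds[OF n] by auto
qed

end
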